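(* Let $\mu>\nu>0$ and let $(Y_i)_{i\ge0},(e_i)_{i\ge0}$ be sequences with values in $[0,1]$, with $e_0=1/2$, satisfying the decoy-state constraints (DS) for some reals $Q_\mu,Q_\nu,E_\mu,E_\nu$. Define $$Y_1^*=\frac{\mu^2Q_\nu e^{\nu}-\nu^2Q_\mu e^{\mu}}{\mu\nu(\mu-\nu)},\qquad e_1^*=\frac{\mu^2E_\nu Q_\nu e^{\nu}-\nu^2E_\mu Q_\mu e^{\mu}}{\mu^2Q_\nu e^{\nu}-\nu^2Q_\mu e^{\mu}},\qquad e_2^*Y_2^*:=\frac{2\big(\nu E_\mu Q_\mu e^{\mu}-\mu E_\nu Q_\nu e^{\nu}\big)}{\mu\nu(\mu-\nu)},$$ (these are the values of $Y_1,e_1$ and $e_2Y_2$ solving the four equations of (DS) when $Y_0=0$ and $Y_i=0$ for all $i\ge3$), assuming $\mu^2Q_\nu e^{\nu}\ne\nu^2Q_\mu e^{\mu}$. Assume $0<e_1^*\le 1/2$, and with $a=1+\log_2(1-e_1^* )$, $b=\log_2(1-e_1^* )-\log_2 e_1^*$ assume $(a-b)\frac{\nu}{\mu+\nu}+(b-2a)\ge0$. Then $$Y_1\big[1-h(e_1)\big]\ \ge\ Y_1^*\big[1-h(e_1^* )\big]+\frac{\nu}{2}\big(1+\log_2 e_1^*\big)\,e_2^*Y_2^* .$$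
   Context: $h(x)=-x\log_2 x-(1-x)\log_2(1-x)$ is the binary entropy function on $[0,1]$ (with $0\log_2 0=0$). For reals $\mu>\nu>0$, the decoy-state constraints (DS) on sequences $(Y_i)_{i\ge0},(e_i)_{i\ge0}$ with values in $[0,1]$ are $$Q_\mu=\sum_{i=0}^\infty \frac{\mu^i e^{-\mu}}{i!}Y_i,\quad Q_\nu=\sum_{i=0}^\infty \frac{\nu^i e^{-\nu}}{i!}Y_i,\quad E_\mu Q_\mu=\sum_{i=0}^\infty \frac{\mu^i e^{-\mu}}{i!}Y_ie_i,\quad E_\nu Q_\nu=\sum_{i=0}^\infty \frac{\nu^i e^{-\nu}}{i!}Y_ie_i.$$ *)

theory Defs
  imports Complex_Main
begin

definition bin_entropy :: "real \<Rightarrow> real" where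
  "bin_entropy x =
     (if x = 0 then 0 else - x * log 2 x) +
     (if 1 - x = 0 then 0 else - (1 - x) * log 2 (1 - x))"

end

theory Submission imports Defs begin

text \<open>
  Since \<open>1 - h\<close> is convex, it lies above its tangent line at \<open>e\<^sub>1\<^sup>*\<close>, which is
  \<open>a - b x\<close> with \<open>a, b\<close> as in the hypothesis; so it suffices to bound the linear
  quantity \<open>Y\<^sub>1 (a - b e\<^sub>1)\<close> from below.  This is a linear programme in the \<open>Y\<^sub>i\<close>
  and \<open>Y\<^sub>i e\<^sub>i\<close>, and the bound comes from a dual certificate: a linear combination of the
  four decoy-state equations whose \<open>i\<close>-th coefficient is nonnegative for every \<open>i \<noteq> 1\<close>
  (for \<open>i = 0\<close> this uses \<open>e\<^sub>0 = 1/2\<close> and the hypothesis on \<open>a, b\<close>, for \<open>i \<ge> 2\<close> it uses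
  \<open>\<mu> > \<nu>\<close> and \<open>e\<^sub>1\<^sup>* \<le> 1/2\<close>) and equals \<open>-\<mu>\<nu>(\<mu>-\<nu>)(a - b e\<^sub>1)\<close> at \<open>i = 1\<close>.
  Dropping the nonnegative terms gives the bound, whose value is the right-hand side.
\<close>

lemma xlnx_ge_tangent:
  fixes y p :: real
  assumes "0 \<le> y" "0 < p"
  shows "y * ln p + (y - p) \<le> (if y = 0 then 0 else y * ln y)"
proof (cases "y = 0")
  case False
  with assms have "y > 0" by simp
  have "ln (p / y) \<le> p / y - 1"
    using assms \<open>y > 0\<close> by (intro ln_le_minus_one) simp
  then have "y * (ln p - ln y) \<le> y * (p / y - 1)"
    using assms \<open>y > 0\<close> by (intro mult_left_mono) (auto simp: ln_div)
  then show ?thesis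
    using False \<open>y > 0\<close> by (simp add: algebra_simps)
qed (use assms in simp)

lemma bin_entropy_le_cross_entropy:
  fixes x p :: real
  assumes "0 \<le> x" "x \<le> 1" "0 < p" "p < 1"
  shows "bin_entropy x \<le> - x * log 2 p - (1 - x) * log 2 (1 - p)"
proof -
  have "x * ln p + (x - p) \<le> (if x = 0 then 0 else x * ln x)"
    using assms by (intro xlnx_ge_tangent) auto
  moreover have "(1 - x) * ln (1 - p) + ((1 - x) - (1 - p))
      \<le> (if 1 - x = 0 then 0 else (1 - x) * ln (1 - x))"
    using assms by (intro xlnx_ge_tangent) auto
  ultimately have "((if x = 0 then 0 else - x * ln x) + (if 1 - x = 0 then 0 else - (1 - x) * ln (1 - x))) / ln 2
      \<le> (- x * ln p - (1 - x) * ln (1 - p)) / ln 2"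
    by (intro divide_right_mono) (auto split: if_splits simp: algebra_simps)
  then show ?thesis
    unfolding bin_entropy_def log_def by (auto simp: field_simps mult_le_0_iff split: if_splits)
qed

lemma one_minus_bin_entropy_eq_tangent:
  fixes p :: real
  assumes "0 < p" "p < 1"
  shows "1 - bin_entropy p = (1 + log 2 (1 - p)) - (log 2 (1 - p) - log 2 p) * p"
  using assms unfolding bin_entropy_def by (simp add: algebra_simps)

lemma one_minus_bin_entropy_ge_tangent:
  fixes x p :: real
  assumes "0 \<le> x" "x \<le> 1" "0 < p" "p < 1"
  shows "(1 + log 2 (1 - p)) - (log 2 (1 - p) - log 2 p) * x \<le> 1 - bin_entropy x"
  using bin_entropy_le_cross_entropy[OF assms] by (simp add: algebra_simps)

lemma one_plus_log2_eq:
  fixes x :: real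
  assumes "0 < x"
  shows "1 + log 2 x = log 2 (2 * x)"
  using assms by (simp add: log_mult)

lemma bin_entropy_tangent_coeffs:
  fixes p :: real
  assumes "0 < p" "p \<le> 1/2"
  shows "0 \<le> 1 + log 2 (1 - p)" and "1 + log 2 (1 - p) \<le> log 2 (1 - p) - log 2 p"
proof -
  show "0 \<le> 1 + log 2 (1 - p)"
    using one_plus_log2_eq[of "1 - p"] assms by simp
  have "1 + log 2 p \<le> 0"
    using one_plus_log2_eq[of p] assms by simp
  then show "1 + log 2 (1 - p) \<le> log 2 (1 - p) - log 2 p"
    by simp
qed

lemma sums_times_exp_cancel:
  fixes c s :: real
  assumes "(\<lambda>i. c ^ i * exp (- c) / fact i * f i) sums s"
  shows "(\<lambda>i. c ^ i / fact i * f i) sums (s * exp c)"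
proof -
  have "(\<lambda>i. c ^ i * exp (- c) / fact i * f i * exp c) sums (s * exp c)"
    using assms by (rule sums_mult2)
  then show ?thesis
    by (simp add: exp_minus field_simps)
qed

lemma sums_term_le:
  fixes f :: "nat \<Rightarrow> real"
  assumes "f sums s" "\<And>i. i \<noteq> n \<Longrightarrow> 0 \<le> f i"
  shows "f n \<le> s"
  using sum_le_suminf[of f "{n}"] assms by (auto simp: sums_iff)

text \<open>
  The coefficient of the dual certificate at photon number \<open>i\<close>, for error rate \<open>\<epsilon> = e\<^sub>i\<close>,
  up to the factor \<open>Y\<^sub>i / (i! \<mu>\<nu>(\<mu>-\<nu>))\<close>.
\<close>
definition decoy_dual :: "real \<Rightarrow> real \<Rightarrow> real \<Rightarrow> real \<Rightarrow> nat \<Rightarrow> real \<Rightarrow> real" where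
  "decoy_dual a b mu nu i \<epsilon> =
     a * (nu\<^sup>2 * mu ^ i - mu\<^sup>2 * nu ^ i)
     + \<epsilon> * (b * (mu\<^sup>2 * nu ^ i - nu\<^sup>2 * mu ^ i) - nu * (a - b) * (nu * mu ^ i - mu * nu ^ i))"

lemma decoy_dual_one:
  "decoy_dual a b mu nu 1 \<epsilon> = - (mu * nu * (mu - nu)) * (a - b * \<epsilon>)"
  unfolding decoy_dual_def by (simp add: power2_eq_square algebra_simps)

lemma decoy_dual_zero_nonneg:
  fixes a b mu nu :: real
  assumes "0 < nu" "nu < mu" "(a - b) * (nu / (mu + nu)) + (b - 2 * a) \<ge> 0"
  shows "decoy_dual a b mu nu 0 (1/2) \<ge> 0"
proof -
  have "decoy_dual a b mu nu 0 (1/2)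
      = (mu - nu) / 2 * (((a - b) * (nu / (mu + nu)) + (b - 2 * a)) * (mu + nu))"
    unfolding decoy_dual_def using assms by (simp add: field_simps power2_eq_square)
  also have "\<dots> \<ge> 0"
    using assms by (intro mult_nonneg_nonneg) auto
  finally show ?thesis .
qed

lemma decoy_dual_nonneg:
  fixes a b mu nu \<epsilon> :: real
  assumes "0 \<le> nu" "nu \<le> mu" "0 \<le> \<epsilon>" "\<epsilon> \<le> 1" "0 \<le> a" "a \<le> b" "2 \<le> i"
  shows "decoy_dual a b mu nu i \<epsilon> \<ge> 0"
proof -
  obtain k where i: "i = k + 2"
    using \<open>2 \<le> i\<close> by (metis add.commute le_Suc_ex)
  have "nu\<^sup>2 * mu ^ i - mu\<^sup>2 * nu ^ i = mu\<^sup>2 * nu\<^sup>2 * (mu ^ k - nu ^ k)"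
    unfolding i by (simp add: power_add power2_eq_square right_diff_distrib mult_ac)
  moreover have "nu ^ k \<le> mu ^ k"
    using assms by (intro power_mono) auto
  ultimately have gap: "0 \<le> nu\<^sup>2 * mu ^ i - mu\<^sup>2 * nu ^ i"
    by simp
  have "decoy_dual a b mu nu i \<epsilon>
      = a * (1 - \<epsilon>) * (nu\<^sup>2 * mu ^ i - mu\<^sup>2 * nu ^ i) + \<epsilon> * (b - a) * (mu * nu ^ i * (mu - nu))"
    unfolding decoy_dual_def by (simp add: power2_eq_square algebra_simps)
  also have "\<dots> \<ge> 0"
    using assms gap by (intro add_nonneg_nonneg mult_nonneg_nonneg) auto
  finally show ?thesis .
qed

lemma decoy_dual_bound:
  fixes mu nu a b qm qn sm sn :: real and Y e :: "nat \<Rightarrow> real"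
  assumes munu: "0 < nu" "nu < mu"
    and Y: "\<And>i. 0 \<le> Y i" and e: "\<And>i. 0 \<le> e i \<and> e i \<le> 1" and e0: "e 0 = 1/2"
    and qm: "(\<lambda>i. mu ^ i / fact i * Y i) sums qm"
    and qn: "(\<lambda>i. nu ^ i / fact i * Y i) sums qn"
    and sm: "(\<lambda>i. mu ^ i / fact i * (Y i * e i)) sums sm"
    and sn: "(\<lambda>i. nu ^ i / fact i * (Y i * e i)) sums sn"
    and ab: "0 \<le> a" "a \<le> b" "(a - b) * (nu / (mu + nu)) + (b - 2 * a) \<ge> 0"
  shows "(a * (mu\<^sup>2 * qn - nu\<^sup>2 * qm) - b * (mu\<^sup>2 * sn - nu\<^sup>2 * sm)
           + nu * (a - b) * (nu * sm - mu * sn)) / (mu * nu * (mu - nu))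
         \<le> Y 1 * (a - b * e 1)"
proof -
  define S where "S = a * nu\<^sup>2 * qm - a * mu\<^sup>2 * qn + (b * mu\<^sup>2 + nu * mu * (a - b)) * sn
                - (b * nu\<^sup>2 + nu\<^sup>2 * (a - b)) * sm"
  define w where "w i = Y i / fact i * decoy_dual a b mu nu i (e i)" for i
  have "w sums S"
  proof -
    have "w = (\<lambda>i. a * nu\<^sup>2 * (mu ^ i / fact i * Y i) - a * mu\<^sup>2 * (nu ^ i / fact i * Y i)
                + (b * mu\<^sup>2 + nu * mu * (a - b)) * (nu ^ i / fact i * (Y i * e i))
                - (b * nu\<^sup>2 + nu\<^sup>2 * (a - b)) * (mu ^ i / fact i * (Y i * e i)))"
      unfolding w_def decoy_dual_def by (rule ext) (simp add: field_simps power2_eq_square)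
    then show ?thesis
      unfolding S_def by (simp only:) (intro sums_add sums_diff sums_mult qm qn sm sn)
  qed
  moreover have "0 \<le> w i" if "i \<noteq> 1" for i
  proof -
    have "0 \<le> decoy_dual a b mu nu i (e i)"
    proof (cases "i = 0")
      case True
      show ?thesis
        unfolding True e0 by (rule decoy_dual_zero_nonneg[OF munu ab(3)])
    next
      case False
      with \<open>i \<noteq> 1\<close> show ?thesis using munu e[of i] ab by (intro decoy_dual_nonneg) auto
    qed
    then show ?thesis unfolding w_def using Y[of i] by simp
  qed
  ultimately have "w 1 \<le> S"
    by (rule sums_term_le)
  moreover have "w 1 = - (Y 1 * (a - b * e 1) * (mu * nu * (mu - nu)))"
    unfolding w_def decoy_dual_one by simp
  ultimately have "- S \<le> Y 1 * (a - b * e 1) * (mu * nu * (mu - nu))"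
    by linarith
  moreover have "0 < mu * nu * (mu - nu)"
    using munu by simp
  moreover have "a * (mu\<^sup>2 * qn - nu\<^sup>2 * qm) - b * (mu\<^sup>2 * sn - nu\<^sup>2 * sm)
      + nu * (a - b) * (nu * sm - mu * sn) = - S"
    unfolding S_def by (simp add: algebra_simps power2_eq_square)
  ultimately show ?thesis
    by (simp only: pos_divide_le_eq)
qed

lemma decoy_state_bound:
  fixes mu nu a b Qmu Qnu Emu Enu :: real and Y e :: "nat \<Rightarrow> real"
  assumes munu: "0 < nu" "nu < mu"
    and Y: "\<And>i. 0 \<le> Y i" and e: "\<And>i. 0 \<le> e i \<and> e i \<le> 1" and e0: "e 0 = 1/2"
    and DS1: "(\<lambda>i. mu ^ i * exp (- mu) / fact i * Y i) sums Qmu"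
    and DS2: "(\<lambda>i. nu ^ i * exp (- nu) / fact i * Y i) sums Qnu"
    and DS3: "(\<lambda>i. mu ^ i * exp (- mu) / fact i * Y i * e i) sums (Emu * Qmu)"
    and DS4: "(\<lambda>i. nu ^ i * exp (- nu) / fact i * Y i * e i) sums (Enu * Qnu)"
    and ab: "0 \<le> a" "a \<le> b" "(a - b) * (nu / (mu + nu)) + (b - 2 * a) \<ge> 0"
  shows "(a * (mu\<^sup>2 * Qnu * exp nu - nu\<^sup>2 * Qmu * exp mu)
           - b * (mu\<^sup>2 * Enu * Qnu * exp nu - nu\<^sup>2 * Emu * Qmu * exp mu)
           + nu * (a - b) * (nu * Emu * Qmu * exp mu - mu * Enu * Qnu * exp nu))
         / (mu * nu * (mu - nu)) \<le> Y 1 * (a - b * e 1)"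
proof -
  have "(a * (mu\<^sup>2 * (Qnu * exp nu) - nu\<^sup>2 * (Qmu * exp mu))
      - b * (mu\<^sup>2 * (Enu * Qnu * exp nu) - nu\<^sup>2 * (Emu * Qmu * exp mu))
      + nu * (a - b) * (nu * (Emu * Qmu * exp mu) - mu * (Enu * Qnu * exp nu)))
      / (mu * nu * (mu - nu)) \<le> Y 1 * (a - b * e 1)"
  proof (rule decoy_dual_bound)
    show "(\<lambda>i. mu ^ i / fact i * Y i) sums (Qmu * exp mu)"
      using DS1 by (rule sums_times_exp_cancel)
    show "(\<lambda>i. nu ^ i / fact i * Y i) sums (Qnu * exp nu)"
      using DS2 by (rule sums_times_exp_cancel)
    show "(\<lambda>i. mu ^ i / fact i * (Y i * e i)) sums (Emu * Qmu * exp mu)"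
      using DS3[unfolded mult.assoc] by (rule sums_times_exp_cancel)
    show "(\<lambda>i. nu ^ i / fact i * (Y i * e i)) sums (Enu * Qnu * exp nu)"
      using DS4[unfolded mult.assoc] by (rule sums_times_exp_cancel)
  qed (use munu Y e e0 ab in auto)
  then show ?thesis
    by (simp only: mult.assoc)
qed

theorem theorem2:
  fixes mu nu Qmu Qnu Emu Enu :: real
    and Y e :: "nat \<Rightarrow> real"
  assumes munu: "mu > nu" "nu > 0"
    and Yrange: "\<And>i. 0 \<le> Y i \<and> Y i \<le> 1"
    and erange: "\<And>i. 0 \<le> e i \<and> e i \<le> 1"
    and e0: "e 0 = 1/2"
    and DS1: "(\<lambda>i. mu ^ i * exp (- mu) / fact i * Y i) sums Qmu"
    and DS2: "(\<lambda>i. nu ^ i * exp (- nu) / fact i * Y i) sums Qnu"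
    and DS3: "(\<lambda>i. mu ^ i * exp (- mu) / fact i * Y i * e i) sums (Emu * Qmu)"
    and DS4: "(\<lambda>i. nu ^ i * exp (- nu) / fact i * Y i * e i) sums (Enu * Qnu)"
    and nondeg: "mu\<^sup>2 * Qnu * exp nu \<noteq> nu\<^sup>2 * Qmu * exp mu"
    and e1s_pos: "0 < (mu\<^sup>2 * Enu * Qnu * exp nu - nu\<^sup>2 * Emu * Qmu * exp mu)
                      / (mu\<^sup>2 * Qnu * exp nu - nu\<^sup>2 * Qmu * exp mu)"
    and e1s_le: "(mu\<^sup>2 * Enu * Qnu * exp nu - nu\<^sup>2 * Emu * Qmu * exp mu)
                      / (mu\<^sup>2 * Qnu * exp nu - nu\<^sup>2 * Qmu * exp mu) \<le> 1/2"
    and cond: "let e1s = (mu\<^sup>2 * Enu * Qnu * exp nu - nu\<^sup>2 * Emu * Qmu * exp mu)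
                      / (mu\<^sup>2 * Qnu * exp nu - nu\<^sup>2 * Qmu * exp mu);
                   a = 1 + log 2 (1 - e1s);
                   b = log 2 (1 - e1s) - log 2 e1s
               in (a - b) * (nu / (mu + nu)) + (b - 2 * a) \<ge> 0"
  shows "let Y1s = (mu\<^sup>2 * Qnu * exp nu - nu\<^sup>2 * Qmu * exp mu) / (mu * nu * (mu - nu));
             e1s = (mu\<^sup>2 * Enu * Qnu * exp nu - nu\<^sup>2 * Emu * Qmu * exp mu)
                      / (mu\<^sup>2 * Qnu * exp nu - nu\<^sup>2 * Qmu * exp mu);
             e2Y2s = 2 * (nu * Emu * Qmu * exp mu - mu * Enu * Qnu * exp nu) / (mu * nu * (mu - nu))
         in Y 1 * (1 - bin_entropy (e 1))
            \<ge> Y1s * (1 - bin_entropy e1s) + nu / 2 * (1 + log 2 e1s) * e2Y2s"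
proof -
  define D where "D = mu\<^sup>2 * Qnu * exp nu - nu\<^sup>2 * Qmu * exp mu"
  define N where "N = mu\<^sup>2 * Enu * Qnu * exp nu - nu\<^sup>2 * Emu * Qmu * exp mu"
  define M where "M = nu * Emu * Qmu * exp mu - mu * Enu * Qnu * exp nu"
  define K where "K = mu * nu * (mu - nu)"
  define E where "E = N / D"
  define a where "a = 1 + log 2 (1 - E)"
  define b where "b = log 2 (1 - E) - log 2 E"
  have E: "0 < E" "E \<le> 1/2"
    using e1s_pos e1s_le unfolding E_def N_def D_def by auto
  have ab: "0 \<le> a" "a \<le> b"
    using bin_entropy_tangent_coeffs[OF E] unfolding a_def b_def by auto
  have bound: "(a * D - b * N + nu * (a - b) * M) / K \<le> Y 1 * (a - b * e 1)"
    unfolding D_def N_def M_def K_def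
  proof (rule decoy_state_bound[OF munu(2,1) _ erange e0 DS1 DS2 DS3 DS4 ab])
    show "(a - b) * (nu / (mu + nu)) + (b - 2 * a) \<ge> 0"
      using cond unfolding Let_def a_def b_def E_def N_def D_def .
  qed (use Yrange in auto)
  have tangent: "Y 1 * (a - b * e 1) \<le> Y 1 * (1 - bin_entropy (e 1))"
    using one_minus_bin_entropy_ge_tangent[of "e 1" E] erange[of 1] Yrange[of 1] E
    unfolding a_def b_def by (intro mult_left_mono) auto
  have entropy_E: "1 - bin_entropy E = a - b * E"
    using one_minus_bin_entropy_eq_tangent[of E] E unfolding a_def b_def by simp
  have log_E: "1 + log 2 E = a - b"
    unfolding a_def b_def by simp
  have rhs_eq: "D / K * (a - b * E) + nu / 2 * (a - b) * (2 * M / K) = (a * D - b * N + nu * (a - b) * M) / K"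
  proof -
    have "D \<noteq> 0" "K \<noteq> 0"
      using nondeg munu unfolding D_def K_def by simp_all
    then show ?thesis
      unfolding E_def by (simp add: field_simps)
  qed
  show ?thesis
    unfolding Let_def N_def[symmetric] D_def[symmetric] E_def[symmetric] M_def[symmetric]
      K_def[symmetric] entropy_E log_E rhs_eq
    using bound tangent by (rule order_trans)
qed

end
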